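(* Let $m_1,\dots,m_r,n$ be positive integers and $m=\sum_{i=1}^r m_i$. If $K_{m_1,\dots,m_r}\times K_n$ is equitably $k$-colorable for some positive integer $k<\lceil mn/(m+1)\rceil$, then $K_{m_1 n,\dots,m_r n}$ is also equitably $k$-colorable.
   Context: All graphs are finite, simple and undirected. A (proper) $k$-coloring of $G$ is a map $f:V(G)\to\{1,\dots,k\}$ with $f(x)\ne f(y)$ whenever $xy\in E(G)$; an equitable $k$-coloring is a $k$-coloring in which any two color classes $f^{-1}(i)$ differ in size by at most $1$; $G$ is equitably $k$-colorable if it has one. $K_{a_1,\dots,a_r}$ denotes the complete multipartite graph with parts of sizes $a_1,\dots,a_r$; $K_n$ is the complete graph on $n$ vertices. The Kronecker product $G\times H$ has vertex set $V(G)\times V(H)$, with $(x,y)$ adjacent to $(x',y')$ iff $xx'\in E(G)$ and $yy'\in E(H)$. *)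

theory Defs
  imports Complex_Main
begin

text \<open>A finite simple graph is given by a finite vertex set V and a symmetric,
irreflexive adjacency relation E (only its restriction to V matters).\<close>

definition proper_coloring ::
  "'a set \<Rightarrow> ('a \<Rightarrow> 'a \<Rightarrow> bool) \<Rightarrow> nat \<Rightarrow> ('a \<Rightarrow> nat) \<Rightarrow> bool" where
  "proper_coloring V E k f \<longleftrightarrow>
     (\<forall>x\<in>V. f x \<in> {1..k}) \<and> (\<forall>x\<in>V. \<forall>y\<in>V. E x y \<longrightarrow> f x \<noteq> f y)"

definition equitable_coloring ::
  "'a set \<Rightarrow> ('a \<Rightarrow> 'a \<Rightarrow> bool) \<Rightarrow> nat \<Rightarrow> ('a \<Rightarrow> nat) \<Rightarrow> bool" where
  "equitable_coloring V E k f \<longleftrightarrow> proper_coloring V E k f \<and>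
     (\<forall>i\<in>{1..k}. \<forall>j\<in>{1..k}.
        card {x\<in>V. f x = i} \<le> card {x\<in>V. f x = j} + 1)"

definition equitably_colorable ::
  "'a set \<Rightarrow> ('a \<Rightarrow> 'a \<Rightarrow> bool) \<Rightarrow> nat \<Rightarrow> bool" where
  "equitably_colorable V E k \<longleftrightarrow> (\<exists>f. equitable_coloring V E k f)"

text \<open>Complete multipartite graph K_{a_0,...,a_{r-1}}: part i is {i} \<times> {..<a i}.\<close>

definition cmp_verts :: "nat \<Rightarrow> (nat \<Rightarrow> nat) \<Rightarrow> (nat \<times> nat) set" where
  "cmp_verts r a = {(i, j). i < r \<and> j < a i}"

definition cmp_adj :: "nat \<times> nat \<Rightarrow> nat \<times> nat \<Rightarrow> bool" where
  "cmp_adj x y \<longleftrightarrow> fst x \<noteq> fst y"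

definition complete_verts :: "nat \<Rightarrow> nat set" where
  "complete_verts n = {..<n}"

definition complete_adj :: "nat \<Rightarrow> nat \<Rightarrow> bool" where
  "complete_adj x y \<longleftrightarrow> x \<noteq> y"

definition kron_verts :: "'a set \<Rightarrow> 'b set \<Rightarrow> ('a \<times> 'b) set" where
  "kron_verts V W = V \<times> W"

definition kron_adj ::
  "('a \<Rightarrow> 'a \<Rightarrow> bool) \<Rightarrow> ('b \<Rightarrow> 'b \<Rightarrow> bool) \<Rightarrow> 'a \<times> 'b \<Rightarrow> 'a \<times> 'b \<Rightarrow> bool" where
  "kron_adj E F x y \<longleftrightarrow> E (fst x) (fst y) \<and> F (snd x) (snd y)"

end

theory Submission
  imports Defs
begin

(* Let G = K_{m_1,...,m_r} x K_n with m = m_1 + ... + m_r, so |V(G)| = m n,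
   and let f be an equitable k-colouring of G with k (m + 1) < m n.
   (1) Equitability forces every colour class of f to have more than m vertices:
       otherwise all classes have at most m + 1 vertices and m n <= k (m + 1).
   (2) In G, a colour class containing two vertices from different parts of the
       multipartite factor lies in a single layer V(K_{m_1,...,m_r}) x {t}, hence has
       at most m vertices.  Together with (1): every colour class of f lies inside
       one part {i} x {..<m_i} x {..<n}.
   (3) The vertex set of K_{m_1 n,...,m_r n} is in part-preserving bijection with V(G)
       via (i, t) |-> ((i, t div n), t mod n).  Pulling f back along this bijection
       keeps all class sizes, and by (2) vertices in different parts get different
       colours, so the pulled-back colouring is an equitable k-colouring. *)

lemma cmp_verts_Sigma: "cmp_verts r a = Sigma {..<r} (\<lambda>i. {..<a i})"
  by (auto simp: cmp_verts_def)

lemma finite_cmp_verts: "finite (cmp_verts r a)"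
  by (simp add: cmp_verts_Sigma)

lemma card_cmp_verts: "card (cmp_verts r a) = (\<Sum>i<r. a i)"
  by (simp add: cmp_verts_Sigma card_SigmaI)

text \<open>If one colour class of an equitable k-colouring has at most b vertices, then all
  classes have at most b + 1 vertices, so the graph has at most k (b + 1) vertices.\<close>

lemma equitable_small_class_bound:
  assumes fin: "finite V" and f: "equitable_coloring V E k f"
    and c: "c \<in> {1..k}" and small: "card {x\<in>V. f x = c} \<le> b"
  shows "card V \<le> k * (b + 1)"
proof -
  have colours: "\<And>x. x \<in> V \<Longrightarrow> f x \<in> {1..k}"
    and balanced: "\<And>i. i \<in> {1..k} \<Longrightarrow> card {x\<in>V. f x = i} \<le> card {x\<in>V. f x = c} + 1"
    using f c unfolding equitable_coloring_def proper_coloring_def by blast+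
  have "V = (\<Union>i\<in>{1..k}. {x\<in>V. f x = i})" using colours by blast
  hence "card V \<le> (\<Sum>i\<in>{1..k}. card {x\<in>V. f x = i})"
    by (metis card_UN_le finite_atLeastAtMost)
  also have "\<dots> \<le> (\<Sum>i\<in>{1..k}. b + 1)"
    by (rule sum_mono) (use balanced small in fastforce)
  finally show ?thesis by simp
qed

lemma equitable_coloring_pullback:
  assumes bij: "bij_betw \<phi> W V" and f: "equitable_coloring V E k f"
    and respects: "\<And>x y. x \<in> W \<Longrightarrow> y \<in> W \<Longrightarrow> E' x y \<Longrightarrow> f (\<phi> x) \<noteq> f (\<phi> y)"
  shows "equitable_coloring W E' k (f \<circ> \<phi>)"
proof -
  have class_card: "card {w\<in>W. f (\<phi> w) = c} = card {x\<in>V. f x = c}" for c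
  proof -
    have "\<phi> ` {w\<in>W. f (\<phi> w) = c} = {x\<in>V. f x = c}"
      using bij by (auto simp: bij_betw_def)
    moreover have "inj_on \<phi> {w\<in>W. f (\<phi> w) = c}"
      using bij inj_on_subset by (fastforce simp: bij_betw_def)
    ultimately show ?thesis by (metis card_image)
  qed
  have "\<phi> x \<in> V" if "x \<in> W" for x using bij that by (auto simp: bij_betw_def)
  thus ?thesis
    using f respects class_card
    unfolding equitable_coloring_def proper_coloring_def by auto
qed

abbreviation kron_cmp_verts :: "nat \<Rightarrow> (nat \<Rightarrow> nat) \<Rightarrow> nat \<Rightarrow> ((nat \<times> nat) \<times> nat) set" where
  "kron_cmp_verts r a n \<equiv> kron_verts (cmp_verts r a) (complete_verts n)"

abbreviation kron_cmp_adj :: "(nat \<times> nat) \<times> nat \<Rightarrow> (nat \<times> nat) \<times> nat \<Rightarrow> bool" where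
  "kron_cmp_adj \<equiv> kron_adj cmp_adj complete_adj"

text \<open>Two vertices in different parts and in different layers are adjacent.  Hence an
  independent set meeting two parts lies in one layer: a vertex z outside the layer of
  x and y would be adjacent to x or to y.\<close>

lemma independent_two_parts_one_layer:
  assumes f: "proper_coloring (kron_cmp_verts r a n) kron_cmp_adj k f"
    and x: "x \<in> kron_cmp_verts r a n" and y: "y \<in> kron_cmp_verts r a n"
    and parts: "fst (fst x) \<noteq> fst (fst y)" and same: "f x = f y"
    and z: "z \<in> kron_cmp_verts r a n" and zcol: "f z = f x"
  shows "snd z = snd x"
proof -
  have proper: "\<And>u v. u \<in> kron_cmp_verts r a n \<Longrightarrow> v \<in> kron_cmp_verts r a n \<Longrightarrow>
      fst (fst u) \<noteq> fst (fst v) \<Longrightarrow> snd u \<noteq> snd v \<Longrightarrow> f u \<noteq> f v"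
    using f by (auto simp: proper_coloring_def kron_adj_def cmp_adj_def complete_adj_def)
  have layer: "snd x = snd y" using proper[OF x y parts] same by blast
  show ?thesis
  proof (rule ccontr)
    assume "snd z \<noteq> snd x"
    thus False
      using proper[OF z x] proper[OF z y] layer parts zcol same by metis
  qed
qed

lemma class_meeting_two_parts_small:
  assumes f: "proper_coloring (kron_cmp_verts r a n) kron_cmp_adj k f"
    and x: "x \<in> kron_cmp_verts r a n" and y: "y \<in> kron_cmp_verts r a n"
    and parts: "fst (fst x) \<noteq> fst (fst y)" and same: "f x = f y"
  shows "card {z \<in> kron_cmp_verts r a n. f z = f x} \<le> (\<Sum>i<r. a i)"
proof -
  have "{z \<in> kron_cmp_verts r a n. f z = f x} \<subseteq> (\<lambda>p. (p, snd x)) ` cmp_verts r a"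
  proof
    fix z assume z: "z \<in> {z \<in> kron_cmp_verts r a n. f z = f x}"
    hence "snd z = snd x" using independent_two_parts_one_layer[OF f x y parts same] by blast
    moreover have "fst z \<in> cmp_verts r a" using z by (auto simp: kron_verts_def)
    ultimately show "z \<in> (\<lambda>p. (p, snd x)) ` cmp_verts r a" by (metis image_eqI prod.collapse)
  qed
  hence "card {z \<in> kron_cmp_verts r a n. f z = f x} \<le> card ((\<lambda>p. (p, snd x)) ` cmp_verts r a)"
    by (intro card_mono finite_imageI finite_cmp_verts)
  also have "\<dots> \<le> card (cmp_verts r a)" by (rule card_image_le[OF finite_cmp_verts])
  finally show ?thesis by (simp add: card_cmp_verts)
qed

definition blowup :: "nat \<Rightarrow> nat \<times> nat \<Rightarrow> (nat \<times> nat) \<times> nat" where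
  "blowup n w = ((fst w, snd w div n), snd w mod n)"

lemma blowup_part [simp]: "fst (fst (blowup n w)) = fst w"
  by (simp add: blowup_def)

lemma bij_betw_blowup:
  assumes "n \<ge> 1"
  shows "bij_betw (blowup n) (cmp_verts r (\<lambda>i. a i * n)) (kron_cmp_verts r a n)"
proof (rule bij_betw_imageI)
  show "inj_on (blowup n) (cmp_verts r (\<lambda>i. a i * n))"
    by (rule inj_onI) (metis blowup_def div_mod_decomp prod.expand prod.inject)
  show "blowup n ` cmp_verts r (\<lambda>i. a i * n) = kron_cmp_verts r a n"
  proof (intro equalityI subsetI)
    fix x assume "x \<in> blowup n ` cmp_verts r (\<lambda>i. a i * n)"
    then obtain i t where "x = blowup n (i, t)" "i < r" "t < a i * n"
      by (auto simp: cmp_verts_def)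
    thus "x \<in> kron_cmp_verts r a n" using assms
      by (simp add: blowup_def kron_verts_def cmp_verts_def complete_verts_def
                    less_mult_imp_div_less)
  next
    fix x assume "x \<in> kron_cmp_verts r a n"
    then obtain i j d where x: "x = ((i, j), d)" "i < r" "j < a i" "d < n"
      by (auto simp: kron_verts_def cmp_verts_def complete_verts_def)
    have "j * n + d < (j + 1) * n" using x(4) by simp
    also have "\<dots> \<le> a i * n" using x(3) by (intro mult_le_mono1) simp
    finally have "(i, j * n + d) \<in> cmp_verts r (\<lambda>i. a i * n)" using x(2) by (simp add: cmp_verts_def)
    moreover have "blowup n (i, j * n + d) = x" using x by (simp add: blowup_def)
    ultimately show "x \<in> blowup n ` cmp_verts r (\<lambda>i. a i * n)" by (metis image_eqI)
  qed
qed

theorem lemma3p1: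
  fixes r n k :: nat and ms :: "nat \<Rightarrow> nat"
  assumes "r \<ge> 1" and "n \<ge> 1"
    and "\<forall>i<r. ms i \<ge> 1"
    and "k \<ge> 1"
    and "int k < ceiling (real ((\<Sum>i<r. ms i) * n) / real ((\<Sum>i<r. ms i) + 1))"
    and "equitably_colorable
           (kron_verts (cmp_verts r ms) (complete_verts n))
           (kron_adj cmp_adj complete_adj) k"
  shows "equitably_colorable (cmp_verts r (\<lambda>i. ms i * n)) cmp_adj k"
proof -
  define m where "m = (\<Sum>i<r. ms i)"
  obtain f where f: "equitable_coloring (kron_cmp_verts r ms n) kron_cmp_adj k f"
    using assms(6) unfolding equitably_colorable_def by blast
  have card_V: "card (kron_cmp_verts r ms n) = m * n"
    by (simp add: kron_verts_def complete_verts_def card_cartesian_product card_cmp_verts m_def)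
  have fin_V: "finite (kron_cmp_verts r ms n)"
    by (simp add: kron_verts_def complete_verts_def finite_cmp_verts)
  have "real k < real (m * n) / real (m + 1)"
    using assms(5) unfolding m_def[symmetric] by (simp add: less_ceiling_iff)
  hence "real k * real (m + 1) < real (m * n)" by (simp add: field_simps)
  hence few_colours: "k * (m + 1) < m * n" by (metis of_nat_less_iff of_nat_mult)
  have parts_differ: "f x \<noteq> f y"
    if "x \<in> kron_cmp_verts r ms n" "y \<in> kron_cmp_verts r ms n" "fst (fst x) \<noteq> fst (fst y)" for x y
  proof
    assume same: "f x = f y"
    have "proper_coloring (kron_cmp_verts r ms n) kron_cmp_adj k f" "f x \<in> {1..k}"
      using f that(1) by (auto simp: equitable_coloring_def proper_coloring_def)
    thus False
      using class_meeting_two_parts_small[OF _ that same] equitable_small_class_bound[OF fin_V f]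
        card_V few_colours by (fastforce simp: m_def)
  qed
  have bij: "bij_betw (blowup n) (cmp_verts r (\<lambda>i. ms i * n)) (kron_cmp_verts r ms n)"
    using bij_betw_blowup[OF assms(2)] .
  have "equitable_coloring (cmp_verts r (\<lambda>i. ms i * n)) cmp_adj k (f \<circ> blowup n)"
  proof (rule equitable_coloring_pullback[OF bij f])
    fix x y assume "x \<in> cmp_verts r (\<lambda>i. ms i * n)" "y \<in> cmp_verts r (\<lambda>i. ms i * n)" "cmp_adj x y"
    thus "f (blowup n x) \<noteq> f (blowup n y)"
      using parts_differ bij_betw_apply[OF bij] by (simp add: cmp_adj_def)
  qed
  thus ?thesis unfolding equitably_colorable_def by blast
qed

end
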